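(* Let $c_0,\tau_0>0$ and let the thermo-viscous attenuation coefficient be $$\alpha^*_{tv}(\omega)=\frac{-i\omega}{c_0\sqrt{1-i\tau_0\omega}}+\frac{i\omega}{c_0},\qquad\omega\in\mathbb{R}.$$ Then the kernel $K(\vec x,t)=\frac{1}{\sqrt{2\pi}}\mathcal{F}^{-1}\{e^{-\alpha^*_{tv}(\cdot)|\vec x|}\}(t)$ violates causality.
   Context: Fourier convention: $\mathcal{F}^{-1}\{\hat f\}(t)=\frac{1}{\sqrt{2\pi}}\int_{\mathbb{R}}e^{-i\omega t}\hat f(\omega)\,d\omega$ (tempered distributions). The square root of a complex number is the root with non-negative real part. $K$ is causal if $t\mapsto K(\vec x,t)$ vanishes for $t<0$ for every $\vec x\in\mathbb{R}^3$. *)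

theory Defs
  imports "HOL-Analysis.Analysis"
begin

definition alpha_tv :: "real \<Rightarrow> real \<Rightarrow> real \<Rightarrow> complex" where
  "alpha_tv c0 tau \<omega> =
     - \<i> * of_real \<omega> / (of_real c0 * csqrt (1 - \<i> * of_real tau * of_real \<omega>))
     + \<i> * of_real \<omega> / of_real c0"

definition inv_fourier :: "(real \<Rightarrow> complex) \<Rightarrow> real \<Rightarrow> complex" where
  "inv_fourier g t =
     complex_of_real (1 / sqrt (2 * pi)) *
       (LINT \<omega>|lborel. exp (- \<i> * of_real \<omega> * of_real t) * g \<omega>)"

definition kernel_tv :: "real \<Rightarrow> real \<Rightarrow> real^3 \<Rightarrow> real \<Rightarrow> complex" where
  "kernel_tv c0 tau x t =
     complex_of_real (1 / sqrt (2 * pi)) *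
       inv_fourier (\<lambda>\<omega>. exp (- alpha_tv c0 tau \<omega> * of_real (norm x))) t"

definition causal :: "(real^3 \<Rightarrow> real \<Rightarrow> complex) \<Rightarrow> bool" where
  "causal K \<longleftrightarrow> (\<forall>x t. t < 0 \<longrightarrow> K x t = 0)"

end

(*
  Factor the kernel's spectrum as exp (- alpha_tv \<omega> d) = damping d \<omega> * exp (- \<i> \<omega> d / c0),
  where damping d \<omega> decays like exp (- C sqrt \<bar>\<omega>\<bar>) and damping d (\<nu> / d) \<rightarrow> 1 as d \<rightarrow> 0.
  If the kernel at distance d vanished for t < 0, Fubini against the tent of half-width
  w = d / c0 shifted into t \<le> 0 would give \<integral> damping d \<omega> * tent_ft w \<omega> d\<omega> = 0, where
  tent_ft w \<omega> = 2 (1 - cos (\<omega> w)) / (w \<omega>\<^sup>2) \<ge> 0 is the Fourier transform of the tent; the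
  shift exactly cancels the delay factor.  Substituting \<omega> = \<nu> / d and letting d \<rightarrow> 0 by
  dominated convergence gives \<integral> tent_ft (1 / c0) = 0, which is impossible since the integrand
  is nonnegative and positive on (0, \<pi> c0).
*)

theory Submission
  imports Defs "HOL-Probability.Sinc_Integral"
begin

(* Unnormalised, with the kernel of inv_fourier: inv_fourier g = fourier g / sqrt (2 \<pi>). *)
definition fourier :: "(real \<Rightarrow> complex) \<Rightarrow> real \<Rightarrow> complex" where
  "fourier f \<omega> = (LINT t|lborel. exp (- \<i> * of_real \<omega> * of_real t) * f t)"

lemma fourier_shift:
  "fourier (\<lambda>t. f (t + w)) \<omega> = exp (\<i> * of_real \<omega> * of_real w) * fourier f \<omega>"
proof -
  have "fourier f \<omega> = (LINT t|lborel. exp (- \<i> * of_real \<omega> * of_real (w + t)) * f (w + t))"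
    unfolding fourier_def
    using lborel_integral_real_affine[where c=1 and t=w
        and f="\<lambda>t. exp (- \<i> * of_real \<omega> * of_real t) * f t"] by simp
  also have "\<dots> = (LINT t|lborel. exp (- \<i> * of_real \<omega> * of_real w) *
                                 (exp (- \<i> * of_real \<omega> * of_real t) * f (t + w)))"
    by (simp add: exp_add[symmetric] algebra_simps)
  also have "\<dots> = exp (- \<i> * of_real \<omega> * of_real w) * fourier (\<lambda>t. f (t + w)) \<omega>"
    by (simp add: fourier_def)
  finally have "fourier f \<omega> * exp (\<i> * of_real \<omega> * of_real w) = fourier (\<lambda>t. f (t + w)) \<omega>"
    by (simp add: exp_minus divide_simps)
  then show ?thesis
    by (simp add: mult.commute)
qed

lemma integrable_bounded_by_inverse_square:
  fixes f :: "real \<Rightarrow> 'a::{banach, second_countable_topology}"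
  assumes "f \<in> borel_measurable lborel" and "\<And>x. norm (f x) \<le> C / (1 + x\<^sup>2)"
  shows "integrable lborel f"
proof (rule Bochner_Integration.integrable_bound[OF _ assms(1)])
  have "integrable lborel (\<lambda>x::real. inverse (1 + x\<^sup>2))"
    using integrable_inverse_1_plus_square by (simp add: set_integrable_def)
  then show "integrable lborel (\<lambda>x. C / (1 + x\<^sup>2))"
    by (simp add: divide_inverse)
  show "AE x in lborel. norm (f x) \<le> norm (C / (1 + x\<^sup>2))"
    using assms(2) by (intro AE_I2) (smt (verit) real_norm_def)
qed

lemma integral_mult_fourier_eq_0:
  fixes g \<psi> :: "real \<Rightarrow> complex"
  assumes g: "integrable lborel g" and causal: "\<And>t. t < 0 \<Longrightarrow> fourier g t = 0"
    and \<psi>: "integrable lborel \<psi>" and supp: "\<And>t. t \<ge> 0 \<Longrightarrow> \<psi> t = 0"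
  shows "(LINT \<omega>|lborel. g \<omega> * fourier \<psi> \<omega>) = 0"
proof -
  define P where "P t \<omega> = \<psi> t * (exp (- \<i> * of_real \<omega> * of_real t) * g \<omega>)" for t \<omega>
  have pair: "pair_sigma_finite lborel lborel" ..
  have [measurable]: "g \<in> borel_measurable lborel" "\<psi> \<in> borel_measurable lborel"
    using g \<psi> by auto
  have P_norm: "norm (P t \<omega>) = norm (\<psi> t) * norm (g \<omega>)" for t \<omega>
    by (simp add: P_def norm_mult)
  have P_integrable: "integrable (lborel \<Otimes>\<^sub>M lborel) (case_prod P)"
  proof (rule pair_sigma_finite.Fubini_integrable[OF pair])
    show "case_prod P \<in> borel_measurable (lborel \<Otimes>\<^sub>M lborel)"
      unfolding P_def by measurable
    show "integrable lborel (\<lambda>t. LINT \<omega>|lborel. norm (case_prod P (t, \<omega>)))"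
      using \<psi> g by (simp add: P_norm)
    show "AE t in lborel. integrable lborel (\<lambda>\<omega>. case_prod P (t, \<omega>))"
    proof (rule AE_I2, rule Bochner_Integration.integrable_bound)
      fix t
      show "integrable lborel (\<lambda>\<omega>. norm (\<psi> t) * norm (g \<omega>))"
        using g by simp
      have "(\<lambda>\<omega>. P t \<omega>) \<in> borel_measurable lborel"
        unfolding P_def by measurable
      then show "(\<lambda>\<omega>. case_prod P (t, \<omega>)) \<in> borel_measurable lborel"
        by simp
      show "AE \<omega> in lborel. norm (case_prod P (t, \<omega>)) \<le> norm (norm (\<psi> t) * norm (g \<omega>))"
        by (simp add: P_norm)
    qed
  qed
  have inner: "(LINT t|lborel. P t \<omega>) = g \<omega> * fourier \<psi> \<omega>" for \<omega>
  proof -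
    have "(\<lambda>t. P t \<omega>) = (\<lambda>t. g \<omega> * (exp (- \<i> * of_real \<omega> * of_real t) * \<psi> t))"
      by (simp add: P_def fun_eq_iff mult_ac)
    then show ?thesis
      by (simp add: fourier_def)
  qed
  have "(LINT \<omega>|lborel. g \<omega> * fourier \<psi> \<omega>) = (LINT \<omega>|lborel. LINT t|lborel. P t \<omega>)"
    by (simp add: inner)
  also have "\<dots> = (LINT t|lborel. LINT \<omega>|lborel. P t \<omega>)"
    using P_integrable by (rule pair_sigma_finite.Fubini_integral[OF pair])
  also have "\<dots> = (LINT t|lborel. \<psi> t * fourier g t)"
    by (simp add: P_def fourier_def mult_ac)
  also have "\<dots> = 0"
  proof -
    have "(\<lambda>t. \<psi> t * fourier g t) = (\<lambda>t. 0)"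
    proof
      show "\<psi> t * fourier g t = 0" for t
        by (cases "t < 0") (simp_all add: causal supp)
    qed
    then show ?thesis
      by simp
  qed
  finally show ?thesis .
qed

definition tent :: "real \<Rightarrow> real \<Rightarrow> real" where
  "tent w s = max 0 (1 - \<bar>s\<bar> / w)"

definition tent_ft :: "real \<Rightarrow> real \<Rightarrow> real" where
  "tent_ft w \<omega> = (if \<omega> = 0 then w else 2 * (1 - cos (\<omega> * w)) / (w * \<omega>\<^sup>2))"

lemma tent_nonneg: "tent w s \<ge> 0"
  by (simp add: tent_def)

lemma tent_eq_0: "w > 0 \<Longrightarrow> \<bar>s\<bar> \<ge> w \<Longrightarrow> tent w s = 0"
  by (simp add: tent_def field_simps)

lemma tent_le_indicator: "w > 0 \<Longrightarrow> tent w s \<le> indicator {-w..w} s"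
  by (auto simp: tent_def indicator_def field_simps)

lemma integrable_tent:
  assumes "w > 0"
  shows "integrable lborel (tent w)"
proof (rule Bochner_Integration.integrable_bound[where f="indicator {-w..w} :: real \<Rightarrow> real"])
  show "tent w \<in> borel_measurable lborel"
    unfolding tent_def by measurable
  show "AE s in lborel. norm (tent w s) \<le> norm (indicator {-w..w} s :: real)"
    using assms by (intro AE_I2) (simp add: tent_nonneg tent_le_indicator)
qed (use assms in simp)

lemma has_integral_tent_cos:
  assumes "w > 0"
  shows "((\<lambda>s. 2 * (1 - s / w) * cos (\<omega> * s)) has_integral tent_ft w \<omega>) {0..w}"
proof (cases "\<omega> = 0")
  case True
  define F where "F s = 2 * (s - s\<^sup>2 / (2 * w))" for s
  have "((\<lambda>s. 2 * (1 - s / w) * cos (\<omega> * s)) has_integral F w - F 0) {0..w}"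
  proof (rule fundamental_theorem_of_calculus)
    show "(F has_vector_derivative 2 * (1 - s / w) * cos (\<omega> * s)) (at s within {0..w})" for s
      unfolding F_def has_real_derivative_iff_has_vector_derivative[symmetric] using assms True
      by (auto intro!: derivative_eq_intros simp: field_simps)
  qed (use assms in simp)
  then show ?thesis
    using assms True by (simp add: F_def tent_ft_def field_simps power2_eq_square)
next
  case False
  define F where "F s = 2 * ((w - s) * sin (\<omega> * s) / (w * \<omega>) - cos (\<omega> * s) / (w * \<omega> * \<omega>))" for s
  have "((\<lambda>s. 2 * (1 - s / w) * cos (\<omega> * s)) has_integral F w - F 0) {0..w}"
  proof (rule fundamental_theorem_of_calculus)
    show "(F has_vector_derivative 2 * (1 - s / w) * cos (\<omega> * s)) (at s within {0..w})" for s
      unfolding F_def has_real_derivative_iff_has_vector_derivative[symmetric] using assms False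
      by (auto intro!: derivative_eq_intros simp: field_simps)
  qed (use assms in simp)
  then show ?thesis
    using assms False by (simp add: F_def tent_ft_def field_simps power2_eq_square)
qed

lemma has_integral_fourier_tent:
  fixes w \<omega> :: real
  assumes w: "w > 0"
  defines "h \<equiv> \<lambda>s. exp (- \<i> * of_real \<omega> * of_real s) * of_real (tent w s)"
  shows "(h has_integral of_real (tent_ft w \<omega>)) {-w..w}"
proof -
  have "continuous_on UNIV h" "continuous_on UNIV (\<lambda>s. h (- s))"
    unfolding h_def tent_def by (intro continuous_intros; use w in auto)+
  then have integrable: "h integrable_on {0..w}" "(\<lambda>s. h (- s)) integrable_on {0..w}"
    by (simp_all add: integrable_continuous_interval continuous_on_subset)
  then have right: "(h has_integral integral {0..w} h) {0..w}"
    and left: "(h has_integral integral {0..w} (\<lambda>s. h (- s))) {-w..0}"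
    using has_integral_reflect_real[where f="\<lambda>s. h (- s)" and a=0 and b=w]
    by (simp_all add: integrable_integral)
  have "((\<lambda>s. h (- s) + h s) has_integral
           integral {0..w} (\<lambda>s. h (- s)) + integral {0..w} h) {0..w}"
    using integrable by (intro has_integral_add) (simp_all add: integrable_integral)
  moreover have "((\<lambda>s. h (- s) + h s) has_integral of_real (tent_ft w \<omega>)) {0..w}"
  proof (rule has_integral_eq[OF _ has_integral_of_real[OF has_integral_tent_cos[OF w]]])
    fix s :: real
    assume "s \<in> {0..w}"
    then have tents: "tent w (- s) = 1 - s / w" "tent w s = 1 - s / w"
      using w by (auto simp: tent_def field_simps)
    have "h (- s) + h s =
        (exp (\<i> * of_real (\<omega> * s)) + exp (- (\<i> * of_real (\<omega> * s)))) * of_real (1 - s / w)"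
      unfolding h_def tents by (simp add: algebra_simps)
    also have "\<dots> = 2 * cos (of_real (\<omega> * s)) * of_real (1 - s / w)"
      by (simp only: cos_exp_eq[of "of_real (\<omega> * s)"]) simp
    finally show "of_real (2 * (1 - s / w) * cos (\<omega> * s)) = h (- s) + h s"
      by (simp add: algebra_simps flip: cos_of_real)
  qed
  ultimately have "integral {0..w} (\<lambda>s. h (- s)) + integral {0..w} h = of_real (tent_ft w \<omega>)"
    by (rule has_integral_unique)
  then show ?thesis
    using has_integral_combine[OF _ _ left right] w by simp
qed

lemma fourier_tent:
  assumes w: "w > 0"
  shows "fourier (\<lambda>s. of_real (tent w s)) \<omega> = of_real (tent_ft w \<omega>)"
proof -
  define h where "h s = exp (- \<i> * of_real \<omega> * of_real s) * of_real (tent w s)" for s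
  have "integrable lborel h"
  proof (rule Bochner_Integration.integrable_bound[where f="indicator {-w..w} :: real \<Rightarrow> real"])
    show "h \<in> borel_measurable lborel"
      unfolding h_def tent_def by measurable
    show "AE s in lborel. norm (h s) \<le> norm (indicator {-w..w} s :: real)"
      using w by (intro AE_I2) (simp add: h_def norm_mult tent_nonneg tent_le_indicator)
  qed (use w in simp)
  moreover have "(h has_integral of_real (tent_ft w \<omega>)) UNIV"
    using has_integral_fourier_tent[OF w, of \<omega>, folded h_def]
    by (rule has_integral_on_superset) (use w in \<open>auto simp: h_def tent_eq_0\<close>)
  ultimately show ?thesis
    unfolding fourier_def h_def[symmetric]
    using has_integral_integral_lborel has_integral_unique by blast
qed

lemma tent_ft_nonneg: "w > 0 \<Longrightarrow> tent_ft w \<omega> \<ge> 0"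
  by (simp add: tent_ft_def)

lemma tent_ft_scale: "d > 0 \<Longrightarrow> tent_ft (d * w) (\<nu> / d) = d * tent_ft w \<nu>"
  by (auto simp: tent_ft_def field_simps power2_eq_square)

lemma tent_ft_le:
  assumes "w > 0"
  shows "tent_ft w \<omega> \<le> w"
proof (cases "\<omega> = 0")
  case False
  have "2 * (1 - cos (\<omega> * w)) = 4 * (sin (\<omega> * w / 2))\<^sup>2"
    using cos_double_sin[of "\<omega> * w / 2"] by simp
  also have "\<dots> \<le> 4 * (\<omega> * w / 2)\<^sup>2"
    using abs_sin_x_le_abs_x[of "\<omega> * w / 2"] by (simp only: abs_le_square_iff)
  also have "\<dots> = w * (w * \<omega>\<^sup>2)"
    by (simp add: power2_eq_square)
  finally show ?thesis
    using assms False by (simp add: tent_ft_def divide_le_eq)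
qed (simp add: tent_ft_def)

lemma tent_ft_le_inverse_square:
  assumes "w > 0"
  shows "tent_ft w \<omega> \<le> (w + 4 / w) / (1 + \<omega>\<^sup>2)"
proof -
  have "2 * (1 - cos (\<omega> * w)) \<le> 4"
    by (smt (verit) cos_ge_minus_one)
  then have "\<omega>\<^sup>2 * tent_ft w \<omega> \<le> 4 / w"
    using assms by (auto simp: tent_ft_def divide_right_mono)
  then have "(1 + \<omega>\<^sup>2) * tent_ft w \<omega> \<le> w + 4 / w"
    using tent_ft_le[OF assms, of \<omega>] by (simp add: distrib_right)
  then show ?thesis
    by (simp add: field_simps add_pos_nonneg)
qed

lemma integrable_tent_ft:
  assumes "w > 0"
  shows "integrable lborel (tent_ft w)"
proof (rule integrable_bounded_by_inverse_square)
  show "tent_ft w \<in> borel_measurable lborel"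
    unfolding tent_ft_def[abs_def] by measurable
  show "norm (tent_ft w \<omega>) \<le> (w + 4 / w) / (1 + \<omega>\<^sup>2)" for \<omega>
    using assms tent_ft_nonneg tent_ft_le_inverse_square by simp
qed

lemma integral_tent_ft_pos:
  assumes w: "w > 0"
  shows "(LINT \<nu>|lborel. tent_ft w \<nu>) > 0"
proof -
  have pos: "tent_ft w \<nu> > 0" if "\<nu> \<in> {0<..<pi / w}" for \<nu>
  proof -
    have "cos (\<nu> * w) < cos 0"
      using that w by (intro cos_monotone_0_pi) (auto simp: field_simps)
    then show ?thesis
      using that w by (auto simp: tent_ft_def intro!: divide_pos_pos)
  qed
  have "\<not> (AE \<nu> in lborel. tent_ft w \<nu> = 0)"
  proof
    assume "AE \<nu> in lborel. tent_ft w \<nu> = 0"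
    then obtain N where N: "{\<nu> \<in> space lborel. tent_ft w \<nu> \<noteq> 0} \<subseteq> N"
        "emeasure lborel N = 0" "N \<in> sets lborel"
      by (rule AE_E)
    with pos have "{0<..<pi / w} \<subseteq> N"
      by force
    then have "emeasure lborel {0<..<pi / w} \<le> emeasure lborel N"
      using N(3) by (rule emeasure_mono)
    with N(2) w show False
      by simp
  qed
  then have "(LINT \<nu>|lborel. tent_ft w \<nu>) \<noteq> 0"
    using integral_nonneg_eq_0_iff_AE[OF integrable_tent_ft[OF w]] tent_ft_nonneg[OF w] by auto
  moreover have "(LINT \<nu>|lborel. tent_ft w \<nu>) \<ge> 0"
    using tent_ft_nonneg[OF w] by (simp add: Bochner_Integration.integral_nonneg)
  ultimately show ?thesis
    by simp
qed

lemma power_divide_le_exp: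
  fixes y :: real
  assumes "y \<ge> 0" and "n > 0"
  shows "(y / n) ^ n \<le> exp y"
proof -
  have "(y / n) ^ n \<le> (1 + y / n) ^ n"
    using assms by (intro power_mono) auto
  also have "\<dots> \<le> exp y"
    using assms by (intro exp_ge_one_plus_x_over_n_power_n) auto
  finally show ?thesis .
qed

lemma power2_Re_csqrt: "(Re (csqrt z))\<^sup>2 = (cmod z + Re z) / 2"
  using abs_Re_le_cmod[of z] by simp

lemma cmod_one_minus_ii_ge_1: "cmod (1 - \<i> * of_real tau * of_real \<omega>) \<ge> 1"
  using abs_Re_le_cmod[of "1 - \<i> * of_real tau * of_real \<omega>"] by simp

definition damping :: "real \<Rightarrow> real \<Rightarrow> real \<Rightarrow> real \<Rightarrow> complex" where
  "damping c0 tau d \<omega> =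
     exp (\<i> * of_real \<omega> * of_real d / (of_real c0 * csqrt (1 - \<i> * of_real tau * of_real \<omega>)))"

lemma one_minus_ii_notin_nonpos_Reals: "1 - \<i> * of_real tau * of_real \<omega> \<notin> \<real>\<^sub>\<le>\<^sub>0"
  by (auto simp: complex_nonpos_Reals_iff)

lemma csqrt_one_minus_ii_nonzero: "csqrt (1 - \<i> * of_real tau * of_real \<omega>) \<noteq> 0"
  using one_minus_ii_notin_nonpos_Reals[of tau \<omega>] by (metis csqrt_eq_0 nonpos_Reals_zero_I)

lemma exp_alpha_tv_eq_damping:
  assumes "c0 \<noteq> 0"
  shows "exp (- alpha_tv c0 tau \<omega> * of_real d) =
         damping c0 tau d \<omega> * exp (- \<i> * of_real \<omega> * of_real (d / c0))"
proof -
  have "- alpha_tv c0 tau \<omega> * of_real d =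
        \<i> * of_real \<omega> * of_real d / (of_real c0 * csqrt (1 - \<i> * of_real tau * of_real \<omega>))
        + (- \<i> * of_real \<omega> * of_real (d / c0))"
    using assms csqrt_one_minus_ii_nonzero[of tau \<omega>] by (simp add: alpha_tv_def field_simps)
  then show ?thesis
    unfolding damping_def exp_add[symmetric] by simp
qed

lemma continuous_on_damping:
  assumes "c0 \<noteq> 0"
  shows "continuous_on UNIV (damping c0 tau d)"
  unfolding damping_def[abs_def]
  using assms csqrt_one_minus_ii_nonzero one_minus_ii_notin_nonpos_Reals
  by (auto intro!: continuous_at_imp_continuous_on continuous_intros isCont_csqrt')

(* With s = csqrt (1 - \<i> \<tau> \<omega>) we have \<i> \<omega> = (1 - s\<^sup>2) / \<tau>, so the exponent is
   d / (c0 \<tau>) * (1 / s - s), and Re (1 / s) = Re s / \<bar>s\<bar>\<^sup>2 = Re s / \<bar>1 - \<i> \<tau> \<omega>\<bar>. *)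
lemma norm_damping:
  fixes c0 tau d \<omega> :: real
  assumes "c0 \<noteq> 0" and "tau > 0"
  defines "z \<equiv> 1 - \<i> * of_real tau * of_real \<omega>"
  shows "norm (damping c0 tau d \<omega>) = exp (- (d / (c0 * tau) * Re (csqrt z) * (1 - 1 / cmod z)))"
proof -
  define s where "s = csqrt z"
  have s: "s \<noteq> 0" "s\<^sup>2 = z"
    using csqrt_one_minus_ii_nonzero by (simp_all add: s_def z_def)
  have "\<i> * of_real \<omega> = (1 - s\<^sup>2) / of_real tau"
    using s(2) assms by (simp add: z_def)
  then have "\<i> * of_real \<omega> * of_real d / (of_real c0 * s) =
      (1 - s\<^sup>2) / of_real tau * of_real d / (of_real c0 * s)"
    by simp
  also have "\<dots> = of_real (d / (c0 * tau)) * (inverse s - s)"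
    using s assms by (simp add: field_simps power2_eq_square)
  finally have "\<i> * of_real \<omega> * of_real d / (of_real c0 * s) = of_real (d / (c0 * tau)) * (inverse s - s)" .
  moreover have "(Re s)\<^sup>2 + (Im s)\<^sup>2 = cmod z"
    by (metis cmod_power2 norm_power s(2))
  then have "Re (inverse s) = Re s / cmod z"
    by simp
  ultimately have "Re (\<i> * of_real \<omega> * of_real d / (of_real c0 * s)) =
      d / (c0 * tau) * (Re s / cmod z - Re s)"
    by simp
  also have "\<dots> = - (d / (c0 * tau)) * Re s * (1 - 1 / cmod z)"
    using assms cmod_one_minus_ii_ge_1[of tau \<omega>] by (simp add: z_def field_simps)
  finally have "Re (\<i> * of_real \<omega> * of_real d / (of_real c0 * s)) =
      - (d / (c0 * tau) * Re s * (1 - 1 / cmod z))"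
    by simp
  then show ?thesis
    by (simp add: damping_def s_def z_def)
qed

lemma norm_damping_le_1:
  assumes "c0 > 0" and "tau > 0" and "d \<ge> 0"
  shows "norm (damping c0 tau d \<omega>) \<le> 1"
proof -
  have "0 \<le> 1 - 1 / cmod (1 - \<i> * of_real tau * of_real \<omega>)"
    using cmod_one_minus_ii_ge_1[of tau \<omega>] by (simp add: divide_le_eq)
  then have "0 \<le> d / (c0 * tau) * Re (csqrt (1 - \<i> * of_real tau * of_real \<omega>)) *
            (1 - 1 / cmod (1 - \<i> * of_real tau * of_real \<omega>))"
    using assms Re_csqrt by (intro mult_nonneg_nonneg) auto
  then show ?thesis
    using assms by (simp add: norm_damping)
qed

(* For r \<ge> 2 the exponent is at least k a / 2, and (y / 4)^4 \<le> exp y gives 16384 = 64 * 256. *)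
lemma square_mul_exp_le:
  fixes k r a :: real
  assumes k: "k > 0" and r: "r \<ge> 1" and a: "a \<ge> 0" "r \<le> 2 * a\<^sup>2"
  shows "r\<^sup>2 * exp (- (k * a * (1 - 1 / r))) \<le> max 4 (16384 / k ^ 4)"
proof -
  define y where "y = k * a * (1 - 1 / r)"
  have "y \<ge> 0"
    using k r a unfolding y_def by (intro mult_nonneg_nonneg) auto
  show ?thesis
  proof (cases "r < 2")
    case True
    have "r\<^sup>2 * exp (- y) \<le> 4 * 1"
    proof (rule mult_mono)
      show "r\<^sup>2 \<le> 4"
        using r True power_mono[of r 2 2] by simp
    qed (use \<open>y \<ge> 0\<close> in auto)
    then show ?thesis
      unfolding y_def[symmetric] by simp
  next
    case False
    then have "k * a * (1 / 2) \<le> k * a * (1 - 1 / r)"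
      using k a by (intro mult_left_mono) (auto simp: field_simps)
    then have "k * a / 2 \<le> y"
      by (simp add: y_def)
    have "k ^ 4 * r\<^sup>2 \<le> k ^ 4 * (2 * a\<^sup>2)\<^sup>2"
      using k r a by (intro mult_left_mono power_mono) auto
    also have "\<dots> = 64 * (k * a / 2) ^ 4"
      by (simp add: power_mult_distrib power2_eq_square power4_eq_xxxx)
    also have "\<dots> \<le> 64 * y ^ 4"
      using \<open>k * a / 2 \<le> y\<close> k a by (intro mult_left_mono power_mono) auto
    also have "\<dots> \<le> 64 * (256 * exp y)"
      using power_divide_le_exp[OF \<open>y \<ge> 0\<close>, of 4] by (simp add: power_divide)
    finally have "r\<^sup>2 \<le> 16384 * exp y / k ^ 4"
      using k by (simp add: pos_le_divide_eq mult.commute)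
    then have "r\<^sup>2 * exp (- y) \<le> 16384 * exp y / k ^ 4 * exp (- y)"
      by (rule mult_right_mono) simp
    also have "\<dots> = 16384 / k ^ 4"
      by (simp add: exp_minus)
    finally show ?thesis
      unfolding y_def by simp
  qed
qed

lemma norm_damping_le_inverse_square:
  assumes c0: "c0 > 0" and tau: "tau > 0" and d: "d > 0"
  obtains C where "\<And>\<omega>. norm (damping c0 tau d \<omega>) \<le> C / (1 + \<omega>\<^sup>2)"
proof -
  define k where "k = d / (c0 * tau)"
  define M where "M = max 1 (1 / tau\<^sup>2)"
  have "norm (damping c0 tau d \<omega>) \<le> M * max 4 (16384 / k ^ 4) / (1 + \<omega>\<^sup>2)" for \<omega>
  proof -
    define z where "z = 1 - \<i> * of_real tau * of_real \<omega>"
    have z: "Re z = 1" "(cmod z)\<^sup>2 = 1 + tau\<^sup>2 * \<omega>\<^sup>2" "cmod z \<ge> 1"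
      using cmod_one_minus_ii_ge_1[of tau \<omega>] by (simp_all add: z_def cmod_power2 power_mult_distrib)
    have norm_eq: "norm (damping c0 tau d \<omega>) = exp (- (k * Re (csqrt z) * (1 - 1 / cmod z)))"
      using norm_damping[of c0 tau d \<omega>] c0 tau by (simp add: k_def z_def)
    have "(cmod z)\<^sup>2 * norm (damping c0 tau d \<omega>) \<le> max 4 (16384 / k ^ 4)"
      unfolding norm_eq
    proof (rule square_mul_exp_le)
      show "cmod z \<le> 2 * (Re (csqrt z))\<^sup>2"
        using z(1) by (simp only: power2_Re_csqrt) simp
    qed (use c0 tau d z Re_csqrt in \<open>simp_all add: k_def\<close>)
    moreover have "1 + \<omega>\<^sup>2 \<le> M * (cmod z)\<^sup>2"
    proof -
      have "1 + \<omega>\<^sup>2 = 1 + 1 / tau\<^sup>2 * (tau\<^sup>2 * \<omega>\<^sup>2)"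
        using tau by simp
      also have "\<dots> \<le> M * 1 + M * (tau\<^sup>2 * \<omega>\<^sup>2)"
        unfolding M_def by (intro add_mono mult_right_mono) auto
      finally show ?thesis
        by (simp add: z(2) distrib_left)
    qed
    ultimately have "(1 + \<omega>\<^sup>2) * norm (damping c0 tau d \<omega>) \<le> M * max 4 (16384 / k ^ 4)"
      using mult_right_mono[of "1 + \<omega>\<^sup>2" "M * (cmod z)\<^sup>2" "norm (damping c0 tau d \<omega>)"]
        mult_left_mono[of _ _ M]
      by (fastforce simp: M_def mult.assoc)
    then show ?thesis
      by (simp add: field_simps add_pos_nonneg)
  qed
  then show ?thesis
    by (rule that)
qed

lemma integrable_damping:
  assumes "c0 > 0" and "tau > 0" and "d > 0"
  shows "integrable lborel (damping c0 tau d)"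
proof -
  obtain C where "\<And>\<omega>. norm (damping c0 tau d \<omega>) \<le> C / (1 + \<omega>\<^sup>2)"
    using norm_damping_le_inverse_square[OF assms] by blast
  moreover have "damping c0 tau d \<in> borel_measurable lborel"
    using continuous_on_damping[of c0 tau d] assms
    by (simp add: borel_measurable_continuous_onI measurable_lborel1)
  ultimately show ?thesis
    by (intro integrable_bounded_by_inverse_square)
qed

lemma damping_rescaled_tendsto:
  assumes c0: "c0 > 0" and tau: "tau > 0" and d: "d \<longlonglongrightarrow> 0" "\<And>n. d n > 0"
  shows "(\<lambda>n. damping c0 tau (d n) (\<nu> / d n)) \<longlonglongrightarrow> 1"
proof -
  define E where
    "E n = \<i> * of_real \<nu> / (of_real c0 * csqrt (1 - \<i> * of_real tau * of_real (\<nu> / d n)))" for n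
  have damping_eq: "damping c0 tau (d n) (\<nu> / d n) = exp (E n)" for n
    using d(2)[of n] by (simp add: damping_def E_def)
  have bound: "norm (E n) \<le> sqrt (\<bar>\<nu>\<bar> * d n / tau) / c0" for n
  proof -
    define r where "r = cmod (1 - \<i> * of_real tau * of_real (\<nu> / d n))"
    have "r \<ge> 1"
      unfolding r_def by (rule cmod_one_minus_ii_ge_1)
    have "tau * \<bar>\<nu>\<bar> / d n \<le> r"
      using abs_Im_le_cmod[of "1 - \<i> * of_real tau * of_real (\<nu> / d n)"] tau d(2)[of n]
      by (simp add: r_def abs_mult)
    then have "\<bar>\<nu>\<bar> * (tau * \<bar>\<nu>\<bar>) \<le> \<bar>\<nu>\<bar> * (d n * r)"
      using d(2)[of n] by (intro mult_left_mono) (auto simp: field_simps)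
    then have "\<nu>\<^sup>2 / r \<le> \<bar>\<nu>\<bar> * d n / tau"
      using \<open>r \<ge> 1\<close> tau by (simp add: field_simps power2_eq_square)
    then have "\<bar>\<nu>\<bar> / sqrt r \<le> sqrt (\<bar>\<nu>\<bar> * d n / tau)"
      by (metis real_sqrt_abs real_sqrt_divide real_sqrt_le_mono)
    moreover have "norm (E n) = \<bar>\<nu>\<bar> / sqrt r / c0"
      using c0 by (simp add: E_def r_def norm_divide norm_mult mult.commute)
    ultimately show ?thesis
      using divide_right_mono[of "\<bar>\<nu>\<bar> / sqrt r" "sqrt (\<bar>\<nu>\<bar> * d n / tau)" c0] c0 by simp
  qed
  have "(\<lambda>n. sqrt (\<bar>\<nu>\<bar> * d n / tau) / c0) \<longlonglongrightarrow> sqrt (\<bar>\<nu>\<bar> * 0 / tau) / c0"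
    using c0 tau by (intro tendsto_intros d(1)) auto
  then have "E \<longlonglongrightarrow> 0"
    using Lim_null_comparison[OF always_eventually, of E] bound by fastforce
  then show ?thesis
    unfolding damping_eq using tendsto_exp by fastforce
qed

lemma causal_imp_integral_damping_tent_ft:
  assumes c0: "c0 > 0" and tau: "tau > 0" and causal: "causal (kernel_tv c0 tau)" and d: "d > 0"
  shows "(LINT \<omega>|lborel. damping c0 tau d \<omega> * of_real (tent_ft (d / c0) \<omega>)) = 0"
proof -
  define w where "w = d / c0"
  have w: "w > 0"
    using c0 d by (simp add: w_def)
  define g where "g \<omega> = exp (- alpha_tv c0 tau \<omega> * of_real d)" for \<omega>
  (* the tent moved into t \<le> 0; its transform carries exp (\<i> \<omega> w), cancelling the delay in g *)
  define \<psi> where "\<psi> t = complex_of_real (tent w (t + w))" for t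
  have g_eq: "g \<omega> = damping c0 tau d \<omega> * exp (- \<i> * of_real \<omega> * of_real w)" for \<omega>
    using exp_alpha_tv_eq_damping[of c0 tau \<omega> d] c0 by (simp add: g_def w_def)
  have "integrable lborel g"
  proof (rule Bochner_Integration.integrable_bound[OF integrable_damping[OF c0 tau d]])
    have "damping c0 tau d \<in> borel_measurable lborel"
      using integrable_damping[OF c0 tau d] by auto
    then show "g \<in> borel_measurable lborel"
      unfolding g_eq[abs_def] by measurable
    show "AE \<omega> in lborel. norm (g \<omega>) \<le> norm (damping c0 tau d \<omega>)"
      by (simp add: g_eq norm_mult)
  qed
  moreover have "fourier g t = 0" if "t < 0" for t
  proof -
    obtain x :: "real^3" where "norm x = d"
      using vector_choose_size d by (metis less_le)
    moreover have "kernel_tv c0 tau x t = 0"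
      using causal that by (simp add: causal_def)
    ultimately show ?thesis
      by (simp add: kernel_tv_def inv_fourier_def fourier_def g_def mult_ac)
  qed
  moreover have "integrable lborel \<psi>"
    using lborel_integrable_real_affine[OF integrable_tent[OF w], of 1 w]
    by (simp add: \<psi>_def[abs_def] add.commute)
  moreover have "\<psi> t = 0" if "t \<ge> 0" for t
    using that w by (simp add: \<psi>_def tent_eq_0)
  ultimately have "(LINT \<omega>|lborel. g \<omega> * fourier \<psi> \<omega>) = 0"
    by (rule integral_mult_fourier_eq_0)
  moreover have "g \<omega> * fourier \<psi> \<omega> = damping c0 tau d \<omega> * of_real (tent_ft w \<omega>)" for \<omega>
  proof -
    have "fourier \<psi> \<omega> = exp (\<i> * of_real \<omega> * of_real w) * of_real (tent_ft w \<omega>)"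
      unfolding \<psi>_def[abs_def] fourier_shift[of "\<lambda>s. of_real (tent w s)"] fourier_tent[OF w] ..
    then have "g \<omega> * fourier \<psi> \<omega> = damping c0 tau d \<omega> *
        (exp (- \<i> * of_real \<omega> * of_real w) * exp (\<i> * of_real \<omega> * of_real w)) * of_real (tent_ft w \<omega>)"
      by (simp add: g_eq mult_ac)
    then show ?thesis
      by (simp add: exp_add[symmetric])
  qed
  ultimately show ?thesis
    by (simp add: w_def)
qed

lemma causal_imp_integral_damping_rescaled:
  assumes c0: "c0 > 0" and tau: "tau > 0" and causal: "causal (kernel_tv c0 tau)" and d: "d > 0"
  shows "(LINT \<nu>|lborel. damping c0 tau d (\<nu> / d) * of_real (tent_ft (1 / c0) \<nu>)) = 0"
proof -
  have "tent_ft (d / c0) (\<nu> / d) = d * tent_ft (1 / c0) \<nu>" for \<nu>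
    using tent_ft_scale[OF d, of "1 / c0" \<nu>] by simp
  then have "(LINT \<omega>|lborel. damping c0 tau d \<omega> * of_real (tent_ft (d / c0) \<omega>)) =
      (LINT \<nu>|lborel. damping c0 tau d (\<nu> / d) * of_real (tent_ft (1 / c0) \<nu>))"
    using lborel_integral_real_affine[where c="1 / d" and t=0
        and f="\<lambda>\<omega>. damping c0 tau d \<omega> * of_real (tent_ft (d / c0) \<omega>)"] d
    by (simp add: mult_ac scaleR_conv_of_real)
  then show ?thesis
    using causal_imp_integral_damping_tent_ft[OF assms] by simp
qed

lemma integral_damping_rescaled_tendsto:
  assumes c0: "c0 > 0" and tau: "tau > 0" and w: "w > 0"
    and d: "d \<longlonglongrightarrow> 0" "\<And>n. d n > 0"
  shows "(\<lambda>n. LINT \<nu>|lborel. damping c0 tau (d n) (\<nu> / d n) * of_real (tent_ft w \<nu>))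
           \<longlonglongrightarrow> of_real (LINT \<nu>|lborel. tent_ft w \<nu>)"
proof -
  have "(\<lambda>n. LINT \<nu>|lborel. damping c0 tau (d n) (\<nu> / d n) * of_real (tent_ft w \<nu>))
          \<longlonglongrightarrow> (LINT \<nu>|lborel. of_real (tent_ft w \<nu>))"
  proof (rule integral_dominated_convergence[where w="tent_ft w"])
    show "(\<lambda>\<nu>. complex_of_real (tent_ft w \<nu>)) \<in> borel_measurable lborel"
      using integrable_tent_ft[OF w] by measurable
    show "(\<lambda>\<nu>. damping c0 tau (d n) (\<nu> / d n) * of_real (tent_ft w \<nu>)) \<in> borel_measurable lborel" for n
    proof -
      have [measurable]: "damping c0 tau (d n) \<in> borel_measurable lborel"
        using integrable_damping[OF c0 tau d(2)] by auto
      show ?thesis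
        using integrable_tent_ft[OF w] by measurable
    qed
    show "AE \<nu> in lborel. (\<lambda>n. damping c0 tau (d n) (\<nu> / d n) * of_real (tent_ft w \<nu>))
            \<longlonglongrightarrow> of_real (tent_ft w \<nu>)"
    proof (rule AE_I2)
      show "(\<lambda>n. damping c0 tau (d n) (\<nu> / d n) * of_real (tent_ft w \<nu>)) \<longlonglongrightarrow> of_real (tent_ft w \<nu>)"
        for \<nu>
        using tendsto_mult[OF damping_rescaled_tendsto[OF c0 tau d] tendsto_const] by simp
    qed
    show "AE \<nu> in lborel. norm (damping c0 tau (d n) (\<nu> / d n) * of_real (tent_ft w \<nu>)) \<le> tent_ft w \<nu>" for n
      using norm_damping_le_1[OF c0 tau less_imp_le[OF d(2)]] tent_ft_nonneg[OF w]
      by (intro AE_I2) (simp add: norm_mult mult_left_le_one_le)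
  qed (rule integrable_tent_ft[OF w])
  then show ?thesis
    by simp
qed

theorem theorem5:
  fixes c0 tau :: real
  assumes "c0 > 0" and "tau > 0"
  shows "\<not> causal (kernel_tv c0 tau)"
proof
  assume causal: "causal (kernel_tv c0 tau)"
  define d where "d n = inverse (real (Suc n))" for n
  have d: "d \<longlonglongrightarrow> 0" "\<And>n. d n > 0"
    using LIMSEQ_inverse_real_of_nat by (simp_all add: d_def[abs_def])
  have "(\<lambda>n. LINT \<nu>|lborel. damping c0 tau (d n) (\<nu> / d n) * of_real (tent_ft (1 / c0) \<nu>))
          \<longlonglongrightarrow> of_real (LINT \<nu>|lborel. tent_ft (1 / c0) \<nu>)"
    using assms d by (intro integral_damping_rescaled_tendsto) auto
  moreover have "(LINT \<nu>|lborel. damping c0 tau (d n) (\<nu> / d n) * of_real (tent_ft (1 / c0) \<nu>)) = 0" for n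
    using causal_imp_integral_damping_rescaled[OF assms causal d(2)] .
  ultimately have "(LINT \<nu>|lborel. tent_ft (1 / c0) \<nu>) = 0"
    by (simp add: LIMSEQ_const_iff)
  with integral_tent_ft_pos[of "1 / c0"] assms(1) show False
    by simp
qed

end
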